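(* Let $p$ be a prime, $s\geq3$, $n\geq1$, $K\in\{\mathbb Z,\mathbb Z_p,\mathbb Z_{(p)}\}$, $F$ a field containing $K$, and $G=\langle a\rangle\cong C_{p^s}$. Let $\Delta$ be the $K$-representation of $G$ given by $\Delta(a)=\begin{pmatrix}\Delta_1(a)&U(a)\\0&\Delta_2(a)\end{pmatrix}$, where $\Delta_1=\delta_0^{(n)}\oplus\delta_1^{(n)}$, $\Delta_2=\delta_2^{(n)}\oplus\delta_s^{(n)}$, and $U(a)=\begin{pmatrix}E_n\otimes\langle1\rangle_0&J_n\otimes\langle1\rangle_0\\ E_n\otimes\langle1\rangle_1&J_n\otimes\langle1\rangle_1\end{pmatrix}$. Let $M_\Delta=K^N$ be the corresponding lattice with standard basis, let $v$ be the first basis vector, and define $T_\Delta:G\to\widehat{M_\Delta}$ by $T_\Delta(a^j)=jp^{-s}v+M_\Delta$ for $j=0,1,\dots,p^s-1$. Then $T_\Delta$ is a $1$-cocycle, and $T_\Delta$ is not cohomologous to zero at the element $b=a^{p^{s-1}}$ of order $p$, i.e. there is no $x\in FM_\Delta$ with $T_\Delta(b)=(b-1)x+M_\Delta$.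
   Context: For $t\geq0$ let $K_t=K[x]/(\Phi_{p^t}(x))$ ($\Phi_{p^t}$ the $p^t$-th cyclotomic polynomial; $K_0=K$), $\xi_t$ the image of $x$ (a primitive $p^t$-th root of unity), so $\xi_{t-1}=\xi_t^p$. Define ordered $K$-bases $B_0=\{1\}$, $B_1=(1,\xi_1,\dots,\xi_1^{p-2})$, and for $j\geq2$, $B_j$ is the concatenation of $\xi_j^0B_{j-1},\xi_j^1B_{j-1},\dots,\xi_j^{p-1}B_{j-1}$. For $t\leq s$, $\delta_t$ is the matrix representation of $G$ on $K_t$ (with $a$ acting as multiplication by $\xi_t$) in the basis $B_t$ (columns = coordinates of images of basis vectors); $\delta_t^{(n)}$ is the direct sum of $n$ copies. $E_n$ is the identity and $J_n$ the $n\times n$ Jordan block with ones on the diagonal (and superdiagonal). For $\omega\in K_t$ ($t=0,1$), $\langle\omega\rangle_t$ denotes the matrix with $|B_t|$ rows all of whose columns are zero except the last, which is the coordinate column of $\omega$ in $B_t$; in $E_n\otimes\langle\cdot\rangle_t$ its number of columns is $\deg\delta_2$, in $J_n\otimes\langle\cdot\rangle_t$ it is $\deg\delta_s$. $FM=F\otimes_KM$, $\widehat M=FM/M$ with $g(x+M)=gx+M$; a $1$-cocycle is $T:G\to\widehat M$ with $T(gh)=gT(h)+T(g)$. *)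

theory Defs
  imports "Jordan_Normal_Form.Matrix" "Jordan_Normal_Form.Jordan_Normal_Form" "HOL-Computational_Algebra.Primes"
begin

definition K_int :: "'f::field_char_0 set" where
  "K_int = range of_int"

definition K_loc :: "nat \<Rightarrow> 'f::field_char_0 set" where
  "K_loc p = {of_int a / of_int b | a b. \<not> int p dvd b}"

text \<open>The p-adic integers Z_p as the inverse limit of Z/p^k Z: compatible
  sequences of residues x k in [0, p^k).\<close>
definition Zp :: "nat \<Rightarrow> (nat \<Rightarrow> int) set" where
  "Zp p = {x. \<forall>k. 0 \<le> x k \<and> x k < int p ^ k \<and> x (Suc k) mod int p ^ k = x k}"

definition zp_add :: "nat \<Rightarrow> (nat \<Rightarrow> int) \<Rightarrow> (nat \<Rightarrow> int) \<Rightarrow> (nat \<Rightarrow> int)" where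
  "zp_add p x y = (\<lambda>k. (x k + y k) mod int p ^ k)"

definition zp_mul :: "nat \<Rightarrow> (nat \<Rightarrow> int) \<Rightarrow> (nat \<Rightarrow> int) \<Rightarrow> (nat \<Rightarrow> int)" where
  "zp_mul p x y = (\<lambda>k. (x k * y k) mod int p ^ k)"

definition zp_one :: "nat \<Rightarrow> (nat \<Rightarrow> int)" where
  "zp_one p = (\<lambda>k. 1 mod int p ^ k)"

definition Zp_embedding :: "nat \<Rightarrow> ((nat \<Rightarrow> int) \<Rightarrow> 'f::field) \<Rightarrow> bool" where
  "Zp_embedding p \<iota> \<longleftrightarrow> inj_on \<iota> (Zp p) \<and> \<iota> (zp_one p) = 1 \<and>
     (\<forall>x\<in>Zp p. \<forall>y\<in>Zp p. \<iota> (zp_add p x y) = \<iota> x + \<iota> y \<and> \<iota> (zp_mul p x y) = \<iota> x * \<iota> y)"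

definition admissible_K :: "nat \<Rightarrow> 'f::field_char_0 set \<Rightarrow> bool" where
  "admissible_K p K \<longleftrightarrow> K = K_int \<or> K = K_loc p \<or> (\<exists>\<iota>. Zp_embedding p \<iota> \<and> K = \<iota> ` Zp p)"

text \<open>deg delta_t = |B_t| = phi(p^t).\<close>
definition deg :: "nat \<Rightarrow> nat \<Rightarrow> nat" where
  "deg p t = (if t = 0 then 1 else p ^ (t - 1) * (p - 1))"

text \<open>Entries of delta_t(a), i.e. the matrix of multiplication by xi_t in the basis B_t
  (columns = coordinates of images).  For t = 1 this is the companion matrix of Phi_p
  in the basis 1, xi_1, ..., xi_1^(p-2).  For t >= 2, with D = |B_(t-1)|, the basis
  vector in position k*D + r is xi_t^k * (r-th vector of B_(t-1)); multiplication by
  xi_t sends it to position (k+1)*D + r if k < p-1, and for k = p-1 to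
  xi_t^p * (r-th vector) = xi_(t-1) * (r-th vector of B_(t-1)) in block 0,
  whose coordinates are column r of delta_(t-1)(a).\<close>
fun delta_entry :: "nat \<Rightarrow> nat \<Rightarrow> nat \<Rightarrow> nat \<Rightarrow> int" where
  "delta_entry p 0 i j = 1"
| "delta_entry p (Suc 0) i j = (if j + 2 < p then (if i = j + 1 then 1 else 0) else -1)"
| "delta_entry p (Suc (Suc t)) i j =
     (let D = deg p (Suc t) in
      if j div D + 1 < p then (if i = j + D then 1 else 0)
      else (if i < D then delta_entry p (Suc t) i (j mod D) else 0))"

definition delta :: "nat \<Rightarrow> nat \<Rightarrow> int mat" where
  "delta p t = mat (deg p t) (deg p t) (\<lambda>(i,j). delta_entry p t i j)"

definition copies :: "nat \<Rightarrow> int mat \<Rightarrow> int mat" where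
  "copies n A = diag_block_mat (replicate n A)"

definition kron :: "int mat \<Rightarrow> int mat \<Rightarrow> int mat" where
  "kron A B = mat (dim_row A * dim_row B) (dim_col A * dim_col B)
     (\<lambda>(i,j). A $$ (i div dim_row B, j div dim_col B) * B $$ (i mod dim_row B, j mod dim_col B))"

definition angle :: "int vec \<Rightarrow> nat \<Rightarrow> int mat" where
  "angle w c = mat (dim_vec w) c (\<lambda>(i,j). if j = c - 1 then w $ i else 0)"

text \<open>Coordinates of 1 = xi_t^0 in B_t (the first basis vector).\<close>
definition coord_one :: "nat \<Rightarrow> nat \<Rightarrow> int vec" where
  "coord_one p t = unit_vec (deg p t) 0"

definition Delta1 :: "nat \<Rightarrow> nat \<Rightarrow> int mat" where
  "Delta1 p n = diag_block_mat (replicate n (delta p 0) @ replicate n (delta p 1))"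

definition Delta2 :: "nat \<Rightarrow> nat \<Rightarrow> nat \<Rightarrow> int mat" where
  "Delta2 p s n = diag_block_mat (replicate n (delta p 2) @ replicate n (delta p s))"

definition U_mat :: "nat \<Rightarrow> nat \<Rightarrow> nat \<Rightarrow> int mat" where
  "U_mat p s n = four_block_mat
     (kron (1\<^sub>m n) (angle (coord_one p 0) (deg p 2))) (kron (jordan_block n 1) (angle (coord_one p 0) (deg p s)))
     (kron (1\<^sub>m n) (angle (coord_one p 1) (deg p 2))) (kron (jordan_block n 1) (angle (coord_one p 1) (deg p s)))"

definition Delta :: "nat \<Rightarrow> nat \<Rightarrow> nat \<Rightarrow> int mat" where
  "Delta p s n = four_block_mat (Delta1 p n) (U_mat p s n)
     (0\<^sub>m (dim_row (Delta2 p s n)) (dim_col (Delta1 p n))) (Delta2 p s n)"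

definition rankN :: "nat \<Rightarrow> nat \<Rightarrow> nat \<Rightarrow> nat" where
  "rankN p s n = dim_row (Delta p s n)"

definition act :: "nat \<Rightarrow> nat \<Rightarrow> nat \<Rightarrow> nat \<Rightarrow> 'f::field_char_0 mat" where
  "act p s n j = map_mat of_int (Delta p s n ^\<^sub>m j)"

definition in_lattice :: "'f set \<Rightarrow> 'f vec \<Rightarrow> bool" where
  "in_lattice K w \<longleftrightarrow> (\<forall>i<dim_vec w. w $ i \<in> K)"

text \<open>Representative in F M of T_Delta(a^j) = j p^(-s) v + M.\<close>
definition T_rep :: "nat \<Rightarrow> nat \<Rightarrow> nat \<Rightarrow> nat \<Rightarrow> 'f::field_char_0 vec" where
  "T_rep p s n j = (of_nat j / of_nat (p ^ s)) \<cdot>\<^sub>v unit_vec (rankN p s n) 0"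

end

theory Submission
  imports Defs
begin

(* Let v = e_0 and consider the linear form
     ell(x) = x_0 - (sum of the coordinates of the first delta_1 copy)
              + (sum of the coordinates along xi_s^(p-1) B_(s-1) in the first one or two delta_s copies).
   Its coefficients are integers, so ell maps M_Delta into K, and ell(v) = 1.  Applying a rotates the
   weights on the delta_1 copy and the blocks xi_s^k B_(s-1) of the delta_s copies; after p steps
   ell(a^p x) = ell(x) + p g(x), where g is the last coordinate of the first delta_2 copy.  On that copy
   a^p acts as xi_1 on every block xi_2^b B_1, and 1 + xi_1 + ... + xi_1^(p-1) = 0, so the values
   g(a^(p l) x) sum to 0 over p consecutive l.  As s >= 3, p^(s-1) = p m with p dividing m, hence ell is
   invariant under b = a^(p^(s-1)) and ell(T(b) - (b - 1) x) = ell(v / p) = 1/p, which is not in K.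
   The cocycle identity is immediate since a fixes v. *)

lemma sum_lessThan_add:
  fixes a b :: nat
  shows "(\<Sum>j<a + b. f j) = (\<Sum>j<a. f j) + (\<Sum>j<b. f (a + j))"
  by (induct b) (auto simp: add.assoc)

lemma sum_lessThan_mult:
  fixes q d :: nat
  shows "(\<Sum>j<q * d. f j) = (\<Sum>k<q. \<Sum>r<d. f (k * d + r))"
proof (induct q)
  case (Suc q)
  have "(\<Sum>j<Suc q * d. f j) = (\<Sum>j<q * d + d. f j)" by (simp add: add.commute)
  then show ?case by (simp add: sum_lessThan_add Suc)
qed simp

lemma sum_lessThan_mod_shift:
  fixes l p :: nat and f :: "nat \<Rightarrow> 'a::cancel_comm_monoid_add"
  shows "(\<Sum>r<p. f ((l + r) mod p)) = (\<Sum>r<p. f r)"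
proof (induct l)
  case (Suc l)
  define g where "g r = f ((l + r) mod p)" for r
  have "g 0 + (\<Sum>r<p. g (Suc r)) = (\<Sum>r<p. g r) + g p"
    unfolding sum.lessThan_Suc_shift[symmetric] by simp
  moreover have "g p = g 0" by (simp add: g_def)
  ultimately have "(\<Sum>r<p. g (Suc r)) = (\<Sum>r<p. g r)" by (simp add: add.commute)
  then show ?case using Suc by (simp add: g_def)
qed simp

lemma sum_of_bool_eq_mult:
  fixes f :: "nat \<Rightarrow> 'a::semiring_1"
  assumes "k < N"
  shows "(\<Sum>j<N. of_bool (j = k) * f j) = f k"
proof -
  have "(\<Sum>j<N. of_bool (j = k) * f j) = (\<Sum>j<N. if j = k then f j else 0)"
    by (intro sum.cong) auto
  then show ?thesis using assms by simp
qed

lemma block_index_less: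
  fixes k m r d :: nat
  assumes "k < m" "r < d"
  shows "k * d + r < m * d"
proof -
  have "k * d + r < Suc k * d" using assms(2) by simp
  also have "\<dots> \<le> m * d" using assms(1) by (intro mult_le_mono1) simp
  finally show ?thesis .
qed

section \<open>Rows of integer matrices\<close>

text \<open>Vectors are modelled as functions \<open>nat \<Rightarrow> 'a\<close>, so that no dimension side conditions arise;
  \<open>row_apply M i x\<close> only reads \<open>x j\<close> for \<open>j < dim_col M\<close>.\<close>

definition row_apply :: "int mat \<Rightarrow> nat \<Rightarrow> (nat \<Rightarrow> 'a::ring_1) \<Rightarrow> 'a" where
  "row_apply M i x = (\<Sum>j<dim_col M. of_int (M $$ (i, j)) * x j)"

lemma row_apply_cong:
  "(\<And>j. j < dim_col M \<Longrightarrow> x j = y j) \<Longrightarrow> row_apply M i x = row_apply M i y"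
  unfolding row_apply_def by (intro sum.cong) auto

lemma row_apply_zero_fun [simp]: "row_apply M i (\<lambda>_. 0) = 0"
  by (simp add: row_apply_def)

lemma row_apply_zero_mat [simp]: "i < r \<Longrightarrow> row_apply (0\<^sub>m r c) i x = 0"
  by (simp add: row_apply_def)

lemma row_apply_one_mat [simp]:
  assumes "i < n"
  shows "row_apply (1\<^sub>m n) i x = x i"
proof -
  have "row_apply (1\<^sub>m n) i x = (\<Sum>j<n. if j = i then x j else 0)"
    unfolding row_apply_def using assms by (intro sum.cong) auto
  then show ?thesis using assms by simp
qed

lemma row_apply_jordan_block:
  assumes "i < n"
  shows "row_apply (jordan_block n 1) i x = x i + (if Suc i < n then x (Suc i) else 0)"
proof -
  have "row_apply (jordan_block n 1) i x
      = (\<Sum>j<n. (if j = i then x j else 0) + (if j = Suc i then x j else 0))"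
    unfolding row_apply_def jordan_block_def using assms by (intro sum.cong) auto
  then show ?thesis using assms by (simp add: sum.distrib)
qed

lemma mult_mat_vec_of_int:
  assumes "i < dim_row M" "dim_vec v = dim_col M"
  shows "(map_mat of_int M *\<^sub>v v) $ i = row_apply M i (\<lambda>j. v $ j)"
  using assms by (simp add: row_apply_def scalar_prod_def lessThan_atLeast0)

lemma row_apply_four_block_mat:
  assumes "dim_col B = dim_col D" "dim_col C = dim_col A" "i < dim_row A + dim_row D"
  shows "row_apply (four_block_mat A B C D) i x =
    (if i < dim_row A then row_apply A i x + row_apply B i (\<lambda>j. x (dim_col A + j))
     else row_apply C (i - dim_row A) x + row_apply D (i - dim_row A) (\<lambda>j. x (dim_col A + j)))"
  using assms by (simp add: row_apply_def sum_lessThan_add)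

lemma diag_block_mat_replicate_carrier:
  "M \<in> carrier_mat d d \<Longrightarrow> diag_block_mat (replicate n M) \<in> carrier_mat (n * d) (n * d)"
  by (induct n) (auto simp: Let_def)

lemma row_apply_diag_block_mat_replicate:
  assumes M: "M \<in> carrier_mat d d" and "q < n" "r < d"
  shows "row_apply (diag_block_mat (replicate n M)) (q * d + r) x = row_apply M r (\<lambda>c. x (q * d + c))"
  using assms(2)
proof (induct n arbitrary: q x)
  case (Suc n)
  have B: "diag_block_mat (replicate n M) \<in> carrier_mat (n * d) (n * d)"
    using diag_block_mat_replicate_carrier[OF M] .
  show ?case
  proof (cases q)
    case 0
    then show ?thesis using M B \<open>r < d\<close> by (simp add: Let_def row_apply_four_block_mat)
  next
    case (Suc q')
    then have "q' < n" using Suc.prems by simp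
    then have "q' * d + r < n * d" using \<open>r < d\<close> by (rule block_index_less)
    then show ?thesis using M B \<open>r < d\<close> \<open>q' < n\<close> Suc.hyps[of q' "\<lambda>j. x (d + j)"] \<open>q = Suc q'\<close>
      by (simp add: Let_def row_apply_four_block_mat add.assoc)
  qed
qed simp

lemma kron_carrier: "kron A B \<in> carrier_mat (dim_row A * dim_row B) (dim_col A * dim_col B)"
  by (simp add: kron_def)

lemma row_apply_kron_angle:
  assumes A: "A \<in> carrier_mat m m'" and "dim_vec w = e" "0 < c" "i < m * e"
  shows "row_apply (kron A (angle w c)) i x
       = of_int (w $ (i mod e)) * row_apply A (i div e) (\<lambda>k. x (k * c + (c - 1)))"
proof -
  have e: "0 < e" using assms(4) by (cases e) auto
  have entry: "kron A (angle w c) $$ (i, k * c + r) = A $$ (i div e, k) * (if r = c - 1 then w $ (i mod e) else 0)"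
    if "k < m'" "r < c" for k r
    using block_index_less[OF that] assms that e by (simp add: kron_def angle_def mult.commute)
  have block: "(\<Sum>r<c. of_int (A $$ (i div e, k) * (if r = c - 1 then w $ (i mod e) else 0)) * x (k * c + r))
      = of_int (w $ (i mod e)) * (of_int (A $$ (i div e, k)) * x (k * c + (c - 1)))" for k
  proof -
    have "(\<Sum>r<c. of_int (A $$ (i div e, k) * (if r = c - 1 then w $ (i mod e) else 0)) * x (k * c + r))
        = (\<Sum>r<c. if r = c - 1 then of_int (A $$ (i div e, k) * w $ (i mod e)) * x (k * c + r) else 0)"
      by (intro sum.cong) auto
    then show ?thesis using \<open>0 < c\<close> by (simp add: algebra_simps)
  qed
  have dim: "dim_col (kron A (angle w c)) = m' * c" using A by (simp add: kron_def angle_def)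
  have "row_apply (kron A (angle w c)) i x
      = (\<Sum>k<m'. \<Sum>r<c. of_int (A $$ (i div e, k) * (if r = c - 1 then w $ (i mod e) else 0)) * x (k * c + r))"
    unfolding row_apply_def dim sum_lessThan_mult using entry by (intro sum.cong refl) simp
  also have "\<dots> = of_int (w $ (i mod e)) * row_apply A (i div e) (\<lambda>k. x (k * c + (c - 1)))"
    unfolding block row_apply_def sum_distrib_left using A by simp
  finally show ?thesis .
qed

section \<open>The matrices \<open>\<delta>\<^sub>t(a)\<close>\<close>

lemma deg_0 [simp]: "deg p 0 = 1"
  by (simp add: deg_def)

lemma deg_1 [simp]: "deg p (Suc 0) = p - 1"
  by (simp add: deg_def)

lemma deg_Suc: "1 \<le> t \<Longrightarrow> deg p (Suc t) = p * deg p t"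
  by (cases t) (auto simp: deg_def)

lemma deg_pos: "2 \<le> p \<Longrightarrow> 0 < deg p t"
  by (simp add: deg_def)

lemma delta_carrier: "delta p t \<in> carrier_mat (deg p t) (deg p t)"
  by (simp add: delta_def)

lemma row_apply_delta:
  "i < deg p t \<Longrightarrow> row_apply (delta p t) i x = (\<Sum>j<deg p t. of_int (delta_entry p t i j) * x j)"
  by (simp add: row_apply_def delta_def)

lemma row_apply_delta_shift:
  assumes "2 \<le> p" "1 \<le> b" "b < p" "c < deg p (Suc t)"
  shows "row_apply (delta p (Suc (Suc t))) (b * deg p (Suc t) + c) x = x ((b - 1) * deg p (Suc t) + c)"
proof -
  define D where "D = deg p (Suc t)"
  have D: "deg p (Suc (Suc t)) = p * D" by (simp add: D_def deg_Suc)
  have c: "c < D" using assms by (simp add: D_def)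
  have bD: "b * D = D + (b - 1) * D" using \<open>1 \<le> b\<close> by (cases b) auto
  have i: "b * D + c < p * D" using block_index_less[OF assms(3) c] .
  have entry: "delta_entry p (Suc (Suc t)) (b * D + c) j = of_bool (j = (b - 1) * D + c)" for j
  proof (cases "j = (b - 1) * D + c")
    case True
    then have "j div D = b - 1" using c by simp
    then show ?thesis using True assms bD by (simp add: Let_def D_def)
  qed (use bD in \<open>auto simp: Let_def D_def\<close>)
  have "(b - 1) * D + c < p * D" using i bD by linarith
  then show ?thesis
    unfolding D_def[symmetric] row_apply_delta[OF i[folded D]] D entry
    by (simp add: sum_of_bool_eq_mult)
qed

lemma row_apply_delta_wrap:
  assumes "2 \<le> p" "c < deg p (Suc t)"
  shows "row_apply (delta p (Suc (Suc t))) c x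
       = row_apply (delta p (Suc t)) c (\<lambda>c'. x ((p - 1) * deg p (Suc t) + c'))"
proof -
  define D where "D = deg p (Suc t)"
  have D: "deg p (Suc (Suc t)) = (p - 1) * D + D" using assms by (cases p) (auto simp: D_def deg_Suc)
  have c: "c < D" using assms by (simp add: D_def)
  have low: "delta_entry p (Suc (Suc t)) c j = 0" if "j < (p - 1) * D" for j
  proof -
    have "j div D < p - 1" using that by (rule less_mult_imp_div_less)
    then show ?thesis using c by (simp add: Let_def D_def)
  qed
  have high: "delta_entry p (Suc (Suc t)) c ((p - 1) * D + c') = delta_entry p (Suc t) c c'" if "c' < D" for c'
  proof -
    have "((p - 1) * D + c') div D = p - 1" "((p - 1) * D + c') mod D = c'" using that by auto
    then show ?thesis using c assms by (simp add: Let_def D_def)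
  qed
  have "row_apply (delta p (Suc (Suc t))) c x
      = (\<Sum>j<(p - 1) * D + D. of_int (delta_entry p (Suc (Suc t)) c j) * x j)"
    using row_apply_delta[of c p "Suc (Suc t)"] D c by simp
  also have "\<dots> = (\<Sum>c'<D. of_int (delta_entry p (Suc t) c c') * x ((p - 1) * D + c'))"
    using low high by (simp add: sum_lessThan_add del: delta_entry.simps)
  also have "\<dots> = row_apply (delta p (Suc t)) c (\<lambda>c'. x ((p - 1) * D + c'))"
    by (simp add: D_def row_apply_delta[OF assms(2)])
  finally show ?thesis by (simp add: D_def)
qed

text \<open>\<open>\<delta>\<^sub>1(a)\<close> is the companion matrix of \<open>1 + x + \<dots> + x\<^sup>p\<^sup>-\<^sup>1\<close>.\<close>

lemma sum_row_apply_delta_1: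
  assumes "2 \<le> p"
  shows "(\<Sum>r<p - 1. h r * row_apply (delta p 1) r x)
       = (\<Sum>c<p - 1. h (Suc c) * x c) - (\<Sum>r<p. h r) * x (p - 2)"
proof -
  define m where "m = p - 2"
  have p: "p = Suc (Suc m)" using assms by (simp add: m_def)
  have col: "(\<Sum>r<Suc m. h r * of_int (delta_entry p 1 r c)) = (if c < m then h (Suc c) else - (\<Sum>r<Suc m. h r))"
    if "c < Suc m" for c
  proof (cases "c < m")
    case True
    then have "(\<Sum>r<Suc m. h r * of_int (delta_entry p 1 r c)) = (\<Sum>r<Suc m. if r = Suc c then h r else 0)"
      using p by (intro sum.cong) auto
    then show ?thesis using True by simp
  next
    case False
    then show ?thesis using p that by (simp add: sum_negf)
  qed
  have "(\<Sum>r<p - 1. h r * row_apply (delta p 1) r x)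
      = (\<Sum>r<Suc m. h r * (\<Sum>c<Suc m. of_int (delta_entry p 1 r c) * x c))"
    using p by (intro sum.cong) (simp_all add: row_apply_delta del: delta_entry.simps sum.lessThan_Suc)
  also have "\<dots> = (\<Sum>c<Suc m. \<Sum>r<Suc m. h r * of_int (delta_entry p 1 r c) * x c)"
    unfolding sum_distrib_left mult.assoc by (rule sum.swap)
  also have "\<dots> = (\<Sum>c<Suc m. if c < m then h (Suc c) * x c else - (\<Sum>r<Suc m. h r) * x c)"
    unfolding sum_distrib_right[symmetric]
    using col by (intro sum.cong refl) (auto simp del: delta_entry.simps sum.lessThan_Suc)
  also have "\<dots> = (\<Sum>c<p - 1. h (Suc c) * x c) - (\<Sum>r<p. h r) * x (p - 2)"
    using p by (simp add: algebra_simps)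
  finally show ?thesis .
qed

lemma sum_row_apply_delta:
  assumes "2 \<le> p" "1 \<le> t"
  shows "(\<Sum>i<deg p t. row_apply (delta p t) i x) = (\<Sum>j<deg p t. x j) - of_nat p * x (deg p t - 1)"
  using assms(2)
proof (induct t arbitrary: x rule: nat_induct_at_least)
  case base
  have "deg p 1 - 1 = p - 2" by simp
  then show ?case using sum_row_apply_delta_1[OF assms(1), of "\<lambda>_. 1" x] by simp
next
  case (Suc t)
  obtain t' where t: "t = Suc t'" using Suc.hyps by (cases t) auto
  define D where "D = deg p t"
  have D: "deg p (Suc t) = (p - 1) * D + D"
    using assms Suc.hyps by (cases p) (auto simp: D_def deg_Suc)
  have row_first: "row_apply (delta p (Suc t)) c x = row_apply (delta p t) c (\<lambda>c'. x ((p - 1) * D + c'))"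
    if "c < D" for c
    using row_apply_delta_wrap[OF assms(1), of c t'] that by (simp add: t D_def)
  have row_later: "row_apply (delta p (Suc t)) (Suc b * D + c) x = x (b * D + c)"
    if "b < p - 1" "c < D" for b c
    using row_apply_delta_shift[OF assms(1), of "Suc b" c t'] that less_diff_conv by (simp add: t D_def)
  have "(\<Sum>i<deg p (Suc t). row_apply (delta p (Suc t)) i x)
      = (\<Sum>b<Suc (p - 1). \<Sum>c<D. row_apply (delta p (Suc t)) (b * D + c) x)"
    unfolding D add.commute[of _ D] mult_Suc[symmetric] sum_lessThan_mult ..
  also have "\<dots> = (\<Sum>c<D. row_apply (delta p (Suc t)) c x)
      + (\<Sum>b<p - 1. \<Sum>c<D. row_apply (delta p (Suc t)) (Suc b * D + c) x)"
    by (simp only: sum.lessThan_Suc_shift mult_0 add_0)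
  also have "\<dots> = (\<Sum>c<D. row_apply (delta p t) c (\<lambda>c'. x ((p - 1) * D + c')))
      + (\<Sum>b<p - 1. \<Sum>c<D. x (b * D + c))"
    using row_first row_later by simp
  also have "\<dots> = (\<Sum>j<(p - 1) * D + D. x j) - of_nat p * x ((p - 1) * D + (D - 1))"
    using Suc.hyps(2)[of "\<lambda>c'. x ((p - 1) * D + c')"]
    by (simp add: D_def sum_lessThan_add sum_lessThan_mult[symmetric])
  also have "\<dots> = (\<Sum>j<deg p (Suc t). x j) - of_nat p * x (deg p (Suc t) - 1)"
    using deg_pos[OF assms(1), of t] by (simp add: D D_def)
  finally show ?case .
qed

section \<open>The coefficient rings\<close>

locale unital_additive_subgroup =
  fixes K :: "'a::ring_1 set"
  assumes one_mem: "1 \<in> K" and diff_mem: "a \<in> K \<Longrightarrow> b \<in> K \<Longrightarrow> a - b \<in> K"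
begin

lemma zero_mem: "0 \<in> K"
  using diff_mem[OF one_mem one_mem] by simp

lemma uminus_mem: "a \<in> K \<Longrightarrow> - a \<in> K"
  using diff_mem[OF zero_mem] by fastforce

lemma add_mem: "a \<in> K \<Longrightarrow> b \<in> K \<Longrightarrow> a + b \<in> K"
  using diff_mem[OF _ uminus_mem, of a b] by simp

lemma sum_mem: "(\<And>i. i \<in> A \<Longrightarrow> f i \<in> K) \<Longrightarrow> sum f A \<in> K"
  by (induct A rule: infinite_finite_induct) (auto simp: zero_mem add_mem)

lemma of_int_mem: "of_int k \<in> K"
proof (induct k rule: int_induct[where k = 0])
  case base
  then show ?case using zero_mem by simp
next
  case (step1 i)
  then show ?case using add_mem one_mem by simp
next
  case (step2 i)
  then show ?case using diff_mem one_mem by simp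
qed

end

lemma of_int_unique:
  fixes f :: "int \<Rightarrow> 'a::ring_1"
  assumes add: "\<And>a b. f (a + b) = f a + f b" and one: "f 1 = 1"
  shows "f k = of_int k"
proof -
  have zero: "f 0 = 0" using add[of 0 0] by simp
  show ?thesis
  proof (induct k rule: int_induct[where k = 0])
    case (step2 i)
    have "f (i - 1) + 1 = f i" using add[of "i - 1" 1] one by simp
    then show ?case using step2 by (simp add: eq_diff_eq)
  qed (use zero add one in simp_all)
qed

lemma K_int_unital_additive_subgroup: "unital_additive_subgroup (K_int :: 'a::field_char_0 set)"
  by unfold_locales (auto simp: K_int_def simp flip: of_int_diff)

lemma inverse_notin_K_int:
  assumes "2 \<le> p"
  shows "1 / of_nat p \<notin> (K_int :: 'a::field_char_0 set)"
proof
  assume "1 / of_nat p \<in> (K_int :: 'a set)"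
  then obtain k where "1 / (of_nat p :: 'a) = of_int k" unfolding K_int_def by auto
  then have "(of_int (k * int p) :: 'a) = of_int 1" using assms by (simp add: field_simps)
  then have "k * int p = 1" by (simp only: of_int_eq_iff)
  then have "int p dvd 1" by (metis dvd_triv_right)
  then show False using assms by simp
qed

lemma K_loc_unital_additive_subgroup:
  assumes "prime p"
  shows "unital_additive_subgroup (K_loc p :: 'a::field_char_0 set)"
proof
  show "1 \<in> (K_loc p :: 'a set)"
    using assms unfolding K_loc_def by (auto intro!: exI[of _ 1] simp: prime_gt_1_nat)
next
  fix a b :: 'a assume "a \<in> K_loc p" "b \<in> K_loc p"
  then obtain a1 a2 b1 b2 where a: "a = of_int a1 / of_int a2" "\<not> int p dvd a2"
    and b: "b = of_int b1 / of_int b2" "\<not> int p dvd b2"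
    unfolding K_loc_def by auto
  have "a2 \<noteq> 0" "b2 \<noteq> 0" using a(2) b(2) by auto
  then have "a - b = of_int (a1 * b2 - b1 * a2) / of_int (a2 * b2)"
    unfolding a(1) b(1) by (simp add: field_simps)
  moreover have "\<not> int p dvd a2 * b2"
    using a(2) b(2) assms by (simp add: prime_dvd_mult_iff)
  ultimately show "a - b \<in> K_loc p" unfolding K_loc_def by blast
qed

lemma inverse_notin_K_loc:
  assumes "2 \<le> p"
  shows "1 / of_nat p \<notin> (K_loc p :: 'a::field_char_0 set)"
proof
  assume "1 / of_nat p \<in> (K_loc p :: 'a set)"
  then obtain a b where ab: "1 / (of_nat p :: 'a) = of_int a / of_int b" "\<not> int p dvd b"
    unfolding K_loc_def by auto
  then have "b \<noteq> 0" by auto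
  then have "(of_int b :: 'a) = of_int (int p * a)" using ab(1) assms by (simp add: field_simps)
  then have "b = int p * a" by (simp only: of_int_eq_iff)
  then show False using ab(2) by simp
qed

definition zp_int :: "nat \<Rightarrow> int \<Rightarrow> nat \<Rightarrow> int" where
  "zp_int p a = (\<lambda>k. a mod int p ^ k)"

definition zp_neg :: "nat \<Rightarrow> (nat \<Rightarrow> int) \<Rightarrow> nat \<Rightarrow> int" where
  "zp_neg p x = (\<lambda>k. (- x k) mod int p ^ k)"

lemma Zp_memI:
  assumes "0 < p" "\<And>k. z (Suc k) mod int p ^ k = z k mod int p ^ k"
  shows "(\<lambda>k. z k mod int p ^ k) \<in> Zp p"
proof -
  have "z (Suc k) mod int p ^ Suc k mod int p ^ k = z k mod int p ^ k" for k
    using assms(2)[of k] by (simp add: mod_mod_cancel)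
  then show ?thesis using assms(1) unfolding Zp_def by simp
qed

lemma Zp_Suc_mod: "x \<in> Zp p \<Longrightarrow> x (Suc k) mod int p ^ k = x k mod int p ^ k"
  unfolding Zp_def by auto

lemma zp_int_mem: "0 < p \<Longrightarrow> zp_int p a \<in> Zp p"
  unfolding zp_int_def by (rule Zp_memI) simp_all

lemma zp_add_mem: "0 < p \<Longrightarrow> x \<in> Zp p \<Longrightarrow> y \<in> Zp p \<Longrightarrow> zp_add p x y \<in> Zp p"
  unfolding zp_add_def by (rule Zp_memI) (auto intro!: mod_add_cong simp: Zp_Suc_mod)

lemma zp_mul_mem: "0 < p \<Longrightarrow> x \<in> Zp p \<Longrightarrow> y \<in> Zp p \<Longrightarrow> zp_mul p x y \<in> Zp p"
  unfolding zp_mul_def by (rule Zp_memI) (auto intro!: mod_mult_cong simp: Zp_Suc_mod)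

lemma zp_neg_mem: "0 < p \<Longrightarrow> x \<in> Zp p \<Longrightarrow> zp_neg p x \<in> Zp p"
  unfolding zp_neg_def by (rule Zp_memI) (auto intro!: mod_minus_cong simp: Zp_Suc_mod)

lemma zp_one_mem: "0 < p \<Longrightarrow> zp_one p \<in> Zp p"
  using zp_int_mem[of p 1] by (simp add: zp_one_def zp_int_def)

context
  fixes p :: nat and \<iota> :: "(nat \<Rightarrow> int) \<Rightarrow> 'a::field_char_0"
  assumes p: "2 \<le> p" and emb: "Zp_embedding p \<iota>"
begin

lemma p_pos: "0 < p"
  using p by simp

lemma embedding_add: "x \<in> Zp p \<Longrightarrow> y \<in> Zp p \<Longrightarrow> \<iota> (zp_add p x y) = \<iota> x + \<iota> y"
  and embedding_mul: "x \<in> Zp p \<Longrightarrow> y \<in> Zp p \<Longrightarrow> \<iota> (zp_mul p x y) = \<iota> x * \<iota> y"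
  using emb by (simp_all add: Zp_embedding_def)

lemma embedding_zp_int: "\<iota> (zp_int p a) = of_int a"
proof (rule of_int_unique[where f = "\<lambda>a. \<iota> (zp_int p a)"])
  show "\<iota> (zp_int p (a + b)) = \<iota> (zp_int p a) + \<iota> (zp_int p b)" for a b
    using embedding_add[OF zp_int_mem[OF p_pos] zp_int_mem[OF p_pos], of a b]
    by (simp add: zp_add_def zp_int_def mod_add_eq)
  show "\<iota> (zp_int p 1) = 1"
    using emb by (simp add: Zp_embedding_def zp_one_def zp_int_def)
qed

lemma embedding_zp_neg: "x \<in> Zp p \<Longrightarrow> \<iota> (zp_neg p x) = - \<iota> x"
  using embedding_add[of x "zp_neg p x"] zp_neg_mem[OF p_pos] embedding_zp_int[of 0]
  by (simp add: zp_add_def zp_neg_def zp_int_def mod_add_right_eq add_eq_0_iff)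

lemma Zp_image_unital_additive_subgroup: "unital_additive_subgroup (\<iota> ` Zp p)"
proof
  show "1 \<in> \<iota> ` Zp p"
    using emb zp_one_mem[OF p_pos] by (force simp: Zp_embedding_def)
next
  fix a b assume "a \<in> \<iota> ` Zp p" "b \<in> \<iota> ` Zp p"
  then obtain x y where xy: "x \<in> Zp p" "y \<in> Zp p" "a = \<iota> x" "b = \<iota> y" by auto
  then have "a - b = \<iota> (zp_add p x (zp_neg p y))"
    by (simp add: embedding_add zp_neg_mem[OF p_pos] embedding_zp_neg)
  then show "a - b \<in> \<iota> ` Zp p" using xy by (simp add: zp_add_mem zp_neg_mem p_pos)
qed

text \<open>If \<open>\<iota> x = 1/p\<close> then \<open>p x = 1\<close> in \<open>\<int>\<^sub>p\<close>, which fails already modulo \<open>p\<close>.\<close>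

lemma inverse_notin_Zp_image: "1 / of_nat p \<notin> \<iota> ` Zp p"
proof
  assume "1 / of_nat p \<in> \<iota> ` Zp p"
  then obtain x where x: "x \<in> Zp p" "\<iota> x = 1 / of_nat p" by auto
  have "\<iota> (zp_mul p (zp_int p (int p)) x) = \<iota> (zp_one p)"
    using x p emb by (simp add: embedding_mul zp_int_mem[OF p_pos] embedding_zp_int Zp_embedding_def)
  moreover have "inj_on \<iota> (Zp p)" using emb by (simp add: Zp_embedding_def)
  ultimately have "zp_mul p (zp_int p (int p)) x = zp_one p"
    using x by (auto simp: zp_mul_mem zp_int_mem zp_one_mem p_pos dest: inj_onD)
  then have "zp_mul p (zp_int p (int p)) x 1 = zp_one p 1" by simp
  then show False using p by (simp add: zp_mul_def zp_one_def zp_int_def)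
qed

end

lemma admissible_K:
  assumes "prime p" "admissible_K p K"
  shows "unital_additive_subgroup (K :: 'a::field_char_0 set)" "1 / of_nat p \<notin> K"
proof -
  have p: "2 \<le> p" using assms(1) by (simp add: prime_ge_2_nat)
  from assms(2) consider "K = K_int" | "K = K_loc p" | \<iota> where "Zp_embedding p \<iota>" "K = \<iota> ` Zp p"
    unfolding admissible_K_def by blast
  then have "unital_additive_subgroup K \<and> 1 / of_nat p \<notin> K"
  proof cases
    case 1
    then show ?thesis using p by (simp add: K_int_unital_additive_subgroup inverse_notin_K_int)
  next
    case 2
    then show ?thesis using p assms(1) by (simp add: K_loc_unital_additive_subgroup inverse_notin_K_loc)
  next
    case 3
    then show ?thesis using p by (simp add: Zp_image_unital_additive_subgroup inverse_notin_Zp_image)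
  qed
  then show "unital_additive_subgroup K" "1 / of_nat p \<notin> K" by auto
qed

section \<open>The lattice \<open>M\<^sub>\<Delta>\<close>\<close>

locale Delta_lattice =
  fixes p s n :: nat
  assumes p_ge_2: "2 \<le> p" and s_ge_3: "3 \<le> s" and n_pos: "0 < n"
begin

abbreviation "d2 \<equiv> deg p 2"

abbreviation "ds \<equiv> deg p s"

abbreviation "d' \<equiv> deg p (s - 1)"

text \<open>The \<open>n\<close> copies of \<open>\<delta>\<^sub>0\<close> occupy the coordinates \<open>[0, n)\<close>; the copies of \<open>\<delta>\<^sub>1\<close>, \<open>\<delta>\<^sub>2\<close>
  and \<open>\<delta>\<^sub>s\<close> start at \<open>n\<close>, \<open>start2\<close> and \<open>starts\<close>.\<close>

definition "start2 = n + n * (p - 1)"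

definition "starts = start2 + n * d2"

definition "N = starts + n * ds"

lemma d2_pos: "0 < d2" and ds_pos: "0 < ds"
  using p_ge_2 by (simp_all add: deg_pos)

lemma d2_eq: "d2 = p * (p - 1)"
  by (simp add: deg_def)

lemma ds_eq: "ds = p * d'"
  using s_ge_3 deg_Suc[of "s - 1" p] by simp

lemma d'_pos: "0 < d'"
  using p_ge_2 by (simp add: deg_pos)

lemma n_lt_start2: "n < start2"
proof -
  have "n * 1 \<le> n * (p - 1)" using p_ge_2 by (intro mult_le_mono2) simp
  then show ?thesis using n_pos by (simp add: start2_def)
qed

lemma N_eq: "N = start2 + (n * d2 + n * ds)"
  by (simp add: N_def starts_def)

lemma delta1_index_less:
  assumes "r < p - 1"
  shows "n + r < N"
proof -
  have "p - 1 \<le> n * (p - 1)" using n_pos by simp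
  then show ?thesis using assms unfolding N_eq start2_def by linarith
qed

lemma deltas_index_less:
  assumes "q < n" "k < p" "r < d'"
  shows "starts + q * ds + (k * d' + r) < N"
proof -
  have "k * d' + r < ds" unfolding ds_eq by (rule block_index_less[OF assms(2,3)])
  then have "q * ds + (k * d' + r) < n * ds" using block_index_less[OF assms(1)] by simp
  then show ?thesis by (simp add: N_def)
qed

lemma Delta1_eq: "Delta1 p n = four_block_mat (diag_block_mat (replicate n (delta p 0))) (0\<^sub>m n (n * (p - 1)))
    (0\<^sub>m (n * (p - 1)) n) (diag_block_mat (replicate n (delta p 1)))"
  using diag_block_mat_replicate_carrier[OF delta_carrier, of n p 0]
    diag_block_mat_replicate_carrier[OF delta_carrier, of n p 1]
  by (simp add: Delta1_def diag_block_mat_append)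

lemma Delta2_eq: "Delta2 p s n = four_block_mat (diag_block_mat (replicate n (delta p 2))) (0\<^sub>m (n * d2) (n * ds))
    (0\<^sub>m (n * ds) (n * d2)) (diag_block_mat (replicate n (delta p s)))"
  using diag_block_mat_replicate_carrier[OF delta_carrier, of n p 2]
    diag_block_mat_replicate_carrier[OF delta_carrier, of n p s]
  by (simp add: Delta2_def diag_block_mat_append)

lemma Delta1_carrier: "Delta1 p n \<in> carrier_mat start2 start2"
  using diag_block_mat_replicate_carrier[OF delta_carrier, of n p 0]
    diag_block_mat_replicate_carrier[OF delta_carrier, of n p 1]
  unfolding Delta1_eq start2_def by auto

lemma Delta2_carrier: "Delta2 p s n \<in> carrier_mat (n * d2 + n * ds) (n * d2 + n * ds)"
  using diag_block_mat_replicate_carrier[OF delta_carrier, of n p 2]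
    diag_block_mat_replicate_carrier[OF delta_carrier, of n p s]
  unfolding Delta2_eq by auto

lemma U_carrier: "U_mat p s n \<in> carrier_mat start2 (n * d2 + n * ds)"
proof -
  have "kron (1\<^sub>m n) (angle (coord_one p 0) d2) \<in> carrier_mat n (n * d2)"
    using kron_carrier[of "1\<^sub>m n" "angle (coord_one p 0) d2"] by (simp add: angle_def coord_one_def)
  moreover have "kron (jordan_block n 1) (angle (coord_one p 1) ds) \<in> carrier_mat (n * (p - 1)) (n * ds)"
    using kron_carrier[of "jordan_block n 1" "angle (coord_one p 1) ds"]
    by (simp add: angle_def coord_one_def jordan_block_def)
  ultimately show ?thesis unfolding U_mat_def start2_def by (rule four_block_carrier_mat)
qed

lemma Delta_eq: "Delta p s n = four_block_mat (Delta1 p n) (U_mat p s n)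
    (0\<^sub>m (n * d2 + n * ds) start2) (Delta2 p s n)"
proof -
  have "dim_row (Delta2 p s n) = n * d2 + n * ds" "dim_col (Delta1 p n) = start2"
    using Delta1_carrier Delta2_carrier by auto
  then show ?thesis unfolding Delta_def by (simp only:)
qed

lemma Delta_carrier: "Delta p s n \<in> carrier_mat N N"
  unfolding Delta_eq N_eq by (rule four_block_carrier_mat[OF Delta1_carrier Delta2_carrier])

lemma rankN_eq: "rankN p s n = N"
  using Delta_carrier by (simp add: rankN_def)

lemma row_apply_Delta_upper:
  "i < start2 \<Longrightarrow>
   row_apply (Delta p s n) i x = row_apply (Delta1 p n) i x + row_apply (U_mat p s n) i (\<lambda>j. x (start2 + j))"
  using Delta1_carrier Delta2_carrier U_carrier
  by (simp add: Delta_eq row_apply_four_block_mat)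

lemma row_apply_Delta_lower:
  "i < n * d2 + n * ds \<Longrightarrow>
   row_apply (Delta p s n) (start2 + i) x = row_apply (Delta2 p s n) i (\<lambda>j. x (start2 + j))"
  using Delta1_carrier Delta2_carrier U_carrier
  by (simp add: Delta_eq row_apply_four_block_mat)

lemma row_apply_Delta1_delta0: "i < n \<Longrightarrow> row_apply (Delta1 p n) i x = x i"
  using row_apply_diag_block_mat_replicate[OF delta_carrier, of i n 0 p 0 x]
    diag_block_mat_replicate_carrier[OF delta_carrier, of n p 0]
    diag_block_mat_replicate_carrier[OF delta_carrier, of n p 1]
  by (simp add: Delta1_eq row_apply_four_block_mat row_apply_delta)

lemma row_apply_Delta1_delta1:
  assumes "q < n" "r < p - 1"
  shows "row_apply (Delta1 p n) (n + (q * (p - 1) + r)) x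
       = row_apply (delta p 1) r (\<lambda>c. x (n + (q * (p - 1) + c)))"
proof -
  have "q * (p - 1) + r < n * (p - 1)" using block_index_less[OF assms] .
  then show ?thesis
    using assms row_apply_diag_block_mat_replicate[OF delta_carrier, of q n r p 1 "\<lambda>j. x (n + j)"]
      diag_block_mat_replicate_carrier[OF delta_carrier, of n p 0]
      diag_block_mat_replicate_carrier[OF delta_carrier, of n p 1]
    by (simp add: Delta1_eq row_apply_four_block_mat)
qed

lemma row_apply_Delta2_delta2:
  assumes "q < n" "r < d2"
  shows "row_apply (Delta2 p s n) (q * d2 + r) x = row_apply (delta p 2) r (\<lambda>c. x (q * d2 + c))"
proof -
  have "q * d2 + r < n * d2" using block_index_less[OF assms] .
  then show ?thesis
    using assms row_apply_diag_block_mat_replicate[OF delta_carrier, of q n r p 2 x]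
      diag_block_mat_replicate_carrier[OF delta_carrier, of n p 2]
      diag_block_mat_replicate_carrier[OF delta_carrier, of n p s]
    by (simp add: Delta2_eq row_apply_four_block_mat)
qed

lemma row_apply_Delta2_deltas:
  assumes "q < n" "r < ds"
  shows "row_apply (Delta2 p s n) (n * d2 + (q * ds + r)) x
       = row_apply (delta p s) r (\<lambda>c. x (n * d2 + (q * ds + c)))"
proof -
  have "q * ds + r < n * ds" using block_index_less[OF assms] .
  then show ?thesis
  using assms row_apply_diag_block_mat_replicate[OF delta_carrier, of q n r p s "\<lambda>j. x (n * d2 + j)"]
    diag_block_mat_replicate_carrier[OF delta_carrier, of n p 2]
    diag_block_mat_replicate_carrier[OF delta_carrier, of n p s]
  by (simp add: Delta2_eq row_apply_four_block_mat)
qed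

lemma row_apply_U_first:
  "row_apply (U_mat p s n) 0 y
   = y (d2 - 1) + y (n * d2 + (ds - 1)) + (if 2 \<le> n then y (n * d2 + (ds + (ds - 1))) else 0)"
proof -
  have w: "dim_vec (coord_one p 0) = 1" "coord_one p 0 $ 0 = 1" by (simp_all add: coord_one_def)
  have J: "jordan_block n (1::int) \<in> carrier_mat n n" by (simp add: jordan_block_def)
  have "row_apply (U_mat p s n) 0 y
      = row_apply (kron (1\<^sub>m n) (angle (coord_one p 0) d2)) 0 y
        + row_apply (kron (jordan_block n 1) (angle (coord_one p 0) ds)) 0 (\<lambda>j. y (n * d2 + j))"
    using n_pos by (simp add: U_mat_def row_apply_four_block_mat kron_def angle_def coord_one_def jordan_block_def)
  also have "\<dots> = y (d2 - 1) + y (n * d2 + (ds - 1)) + (if 2 \<le> n then y (n * d2 + (ds + (ds - 1))) else 0)"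
    using n_pos d2_pos ds_pos
    by (simp add: row_apply_kron_angle[OF one_carrier_mat w(1)] row_apply_kron_angle[OF J w(1)]
        w(2) row_apply_jordan_block)
  finally show ?thesis .
qed

lemma row_apply_U_delta1:
  assumes "r < p - 1"
  shows "row_apply (U_mat p s n) (n + r) y = of_bool (r = 0) * row_apply (U_mat p s n) 0 y"
proof -
  have w: "dim_vec (coord_one p 1) = p - 1" "coord_one p 1 $ r = of_bool (r = 0)"
    using assms by (simp_all add: coord_one_def)
  have J: "jordan_block n (1::int) \<in> carrier_mat n n" by (simp add: jordan_block_def)
  have r: "r < n * (p - 1)" "r div (p - 1) = 0" "r mod (p - 1) = r"
    using assms n_pos by (auto intro: less_le_trans[of r "p - 1"])
  have "row_apply (U_mat p s n) (n + r) y
      = row_apply (kron (1\<^sub>m n) (angle (coord_one p 1) d2)) r y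
        + row_apply (kron (jordan_block n 1) (angle (coord_one p 1) ds)) r (\<lambda>j. y (n * d2 + j))"
    using r by (simp add: U_mat_def row_apply_four_block_mat kron_def angle_def coord_one_def jordan_block_def)
  also have "\<dots> = of_bool (r = 0) * (y (d2 - 1) + y (n * d2 + (ds - 1))
      + (if 2 \<le> n then y (n * d2 + (ds + (ds - 1))) else 0))"
  proof -
    have "row_apply (kron (1\<^sub>m n) (angle (coord_one p 1) d2)) r y
        = of_int (coord_one p 1 $ (r mod (p - 1))) * row_apply (1\<^sub>m n) (r div (p - 1)) (\<lambda>k. y (k * d2 + (d2 - 1)))"
      by (rule row_apply_kron_angle[OF one_carrier_mat w(1) d2_pos r(1)])
    then have X3: "row_apply (kron (1\<^sub>m n) (angle (coord_one p 1) d2)) r y = of_bool (r = 0) * y (d2 - 1)"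
      unfolding r(2) r(3) w(2) using n_pos by simp
    have "row_apply (kron (jordan_block n 1) (angle (coord_one p 1) ds)) r (\<lambda>j. y (n * d2 + j))
        = of_int (coord_one p 1 $ (r mod (p - 1)))
          * row_apply (jordan_block n 1) (r div (p - 1)) (\<lambda>k. y (n * d2 + (k * ds + (ds - 1))))"
      by (rule row_apply_kron_angle[OF J w(1) ds_pos r(1)])
    then have X4: "row_apply (kron (jordan_block n 1) (angle (coord_one p 1) ds)) r (\<lambda>j. y (n * d2 + j))
        = of_bool (r = 0) * (y (n * d2 + (ds - 1)) + (if 2 \<le> n then y (n * d2 + (ds + (ds - 1))) else 0))"
      unfolding r(2) r(3) w(2) using n_pos by (simp add: row_apply_jordan_block)
    show ?thesis unfolding X3 X4 by (simp add: algebra_simps)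
  qed
  finally show ?thesis by (simp only: row_apply_U_first)
qed

text \<open>The entries of \<open>U(a)\<close> in rows \<open>0\<close> and \<open>n\<close>: the last coordinates of the first \<open>\<delta>\<^sub>2\<close>
  copy and of the first two \<open>\<delta>\<^sub>s\<close> copies.\<close>

definition U_part :: "(nat \<Rightarrow> 'a::ring_1) \<Rightarrow> 'a" where
  "U_part x = x (start2 + (d2 - 1)) + x (starts + (ds - 1))
     + (if 2 \<le> n then x (starts + (ds + (ds - 1))) else 0)"

lemma row_apply_Delta_first: "row_apply (Delta p s n) 0 x = x 0 + U_part x"
  using n_lt_start2 n_pos
  by (simp add: row_apply_Delta_upper row_apply_Delta1_delta0 row_apply_U_first U_part_def starts_def
      add.assoc)

lemma row_apply_Delta_delta1:
  assumes "r < p - 1"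
  shows "row_apply (Delta p s n) (n + r) x = row_apply (delta p 1) r (\<lambda>c. x (n + c)) + of_bool (r = 0) * U_part x"
proof -
  have "p - 1 \<le> n * (p - 1)" using n_pos by simp
  then have "n + r < start2" using assms unfolding start2_def by linarith
  then have "row_apply (Delta p s n) (n + r) x
      = row_apply (Delta1 p n) (n + (0 * (p - 1) + r)) x
        + of_bool (r = 0) * row_apply (U_mat p s n) 0 (\<lambda>j. x (start2 + j))"
    using assms by (simp add: row_apply_Delta_upper row_apply_U_delta1)
  also have "\<dots> = row_apply (delta p 1) r (\<lambda>c. x (n + c)) + of_bool (r = 0) * U_part x"
    using row_apply_Delta1_delta1[OF n_pos assms, of x]
    by (simp add: row_apply_U_first U_part_def starts_def add.assoc)
  finally show ?thesis .
qed

lemma row_apply_Delta_delta2: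
  assumes "r < d2"
  shows "row_apply (Delta p s n) (start2 + r) x = row_apply (delta p 2) r (\<lambda>c. x (start2 + c))"
proof -
  have "r < n * d2" using block_index_less[OF n_pos assms] by simp
  then show ?thesis
    using row_apply_Delta2_delta2[OF n_pos assms, of "\<lambda>j. x (start2 + j)"]
    by (simp add: row_apply_Delta_lower)
qed

lemma row_apply_Delta_deltas:
  assumes "q < n" "r < ds"
  shows "row_apply (Delta p s n) (starts + q * ds + r) x
       = row_apply (delta p s) r (\<lambda>c. x (starts + q * ds + c))"
proof -
  have "q * ds + r < n * ds" using block_index_less[OF assms] .
  then show ?thesis
    using row_apply_Delta2_deltas[OF assms, of "\<lambda>j. x (start2 + j)"] row_apply_Delta_lower[of "n * d2 + (q * ds + r)" x]
    by (simp add: starts_def add.assoc)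
qed

lemma row_apply_Delta_unit_0:
  assumes "i < N"
  shows "row_apply (Delta p s n) i (\<lambda>j. of_bool (j = 0)) = (of_bool (i = 0) :: 'a::ring_1)"
proof -
  define e :: "nat \<Rightarrow> 'a" where "e = (\<lambda>j. of_bool (j = 0))"
  have shift: "(\<lambda>j. e (k + j)) = (\<lambda>_. 0)" if "0 < k" for k
    using that by (auto simp: e_def)
  have "row_apply (Delta p s n) i e = e i"
  proof (cases "i < start2")
    case True
    then have "row_apply (Delta p s n) i e = row_apply (Delta1 p n) i e"
      using n_lt_start2 by (simp add: row_apply_Delta_upper shift)
    also have "\<dots> = e i"
    proof (cases "i < n")
      case True
      then show ?thesis by (simp add: row_apply_Delta1_delta0)
    next
      case False
      then have "row_apply (Delta1 p n) i e
          = row_apply (diag_block_mat (replicate n (delta p 1))) (i - n) (\<lambda>j. e (n + j))"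
        using \<open>i < start2\<close> diag_block_mat_replicate_carrier[OF delta_carrier, of n p 0]
          diag_block_mat_replicate_carrier[OF delta_carrier, of n p 1]
        by (simp add: Delta1_eq row_apply_four_block_mat start2_def)
      also have "\<dots> = 0" using n_pos by (simp add: shift)
      finally show ?thesis using False n_pos by (simp add: e_def)
    qed
    finally show ?thesis .
  next
    case False
    then have "row_apply (Delta p s n) i e = row_apply (Delta2 p s n) (i - start2) (\<lambda>j. e (start2 + j))"
      using assms row_apply_Delta_lower[of "i - start2" e] by (simp add: N_eq)
    also have "\<dots> = 0" using n_lt_start2 by (simp add: shift)
    finally show ?thesis using False n_lt_start2 by (simp add: e_def)
  qed
  then show ?thesis by (simp add: e_def)
qed

text \<open>Only the values of \<^term>\<open>Delta_map x\<close> below \<^term>\<open>N\<close> are meaningful.\<close>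

definition Delta_map :: "(nat \<Rightarrow> 'a::ring_1) \<Rightarrow> nat \<Rightarrow> 'a" where
  "Delta_map x i = row_apply (Delta p s n) i x"

lemma Delta_map_cong: "(\<And>j. j < N \<Longrightarrow> x j = y j) \<Longrightarrow> Delta_map x i = Delta_map y i"
  unfolding Delta_map_def using Delta_carrier by (intro row_apply_cong) auto

lemma Delta_map_pow_cong:
  assumes "\<And>j. j < N \<Longrightarrow> x j = y j" "i < N"
  shows "(Delta_map ^^ k) x i = (Delta_map ^^ k) y i"
  using assms(2)
proof (induct k arbitrary: i)
  case 0
  then show ?case using assms(1) by simp
next
  case (Suc k)
  have "Delta_map ((Delta_map ^^ k) x) i = Delta_map ((Delta_map ^^ k) y) i"
    by (rule Delta_map_cong) (rule Suc.hyps)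
  then show ?case by simp
qed

lemma Delta_map_pow_unit_0:
  "\<forall>i<N. (Delta_map ^^ k) (\<lambda>j. of_bool (j = 0)) i = (of_bool (i = 0) :: 'a::ring_1)"
proof (induct k)
  case (Suc k)
  show ?case
  proof (intro allI impI)
    fix i assume "i < N"
    have "(Delta_map ^^ Suc k) (\<lambda>j. of_bool (j = 0)) i = Delta_map ((Delta_map ^^ k) (\<lambda>j. of_bool (j = 0))) i"
      by simp
    also have "\<dots> = Delta_map (\<lambda>j. of_bool (j = 0) :: 'a) i"
      using Suc.hyps by (intro Delta_map_cong) blast
    also have "\<dots> = of_bool (i = 0)"
      using \<open>i < N\<close> by (simp add: Delta_map_def row_apply_Delta_unit_0)
    finally show "(Delta_map ^^ Suc k) (\<lambda>j. of_bool (j = 0)) i = (of_bool (i = 0) :: 'a)" .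
  qed
qed simp

lemma act_carrier: "act p s n k \<in> carrier_mat N N"
  using Delta_carrier by (simp add: act_def)

lemma act_mult_vec:
  assumes "v \<in> carrier_vec N" "i < N"
  shows "(act p s n k *\<^sub>v v) $ i = (Delta_map ^^ k) (\<lambda>j. v $ j) i"
proof -
  define A :: "'a mat" where "A = map_mat of_int (Delta p s n)"
  have A: "A \<in> carrier_mat N N" using Delta_carrier by (simp add: A_def)
  have act: "act p s n m = A ^\<^sub>m m" for m
    unfolding act_def A_def by (rule of_int_hom.mat_hom_pow[OF Delta_carrier])
  have "(A ^\<^sub>m k *\<^sub>v v) $ i = (Delta_map ^^ k) (\<lambda>j. v $ j) i"
    using assms
  proof (induct k arbitrary: v)
    case 0
    then show ?case using A by simp
  next
    case (Suc k)
    have Av: "A *\<^sub>v v \<in> carrier_vec N" by (rule mult_mat_vec_carrier[OF A Suc.prems(1)])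
    have "A ^\<^sub>m Suc k *\<^sub>v v = A ^\<^sub>m k *\<^sub>v (A *\<^sub>v v)"
      unfolding pow_mat.simps(2) by (rule assoc_mult_mat_vec[OF pow_carrier_mat[OF A] A Suc.prems(1)])
    then have "(A ^\<^sub>m Suc k *\<^sub>v v) $ i = (A ^\<^sub>m k *\<^sub>v (A *\<^sub>v v)) $ i" by (rule arg_cong)
    also have "\<dots> = (Delta_map ^^ k) (\<lambda>j. (A *\<^sub>v v) $ j) i"
      by (rule Suc.hyps[OF Av Suc.prems(2)])
    also have "\<dots> = (Delta_map ^^ k) (Delta_map (\<lambda>j. v $ j)) i"
    proof (rule Delta_map_pow_cong[OF _ Suc.prems(2)])
      fix j assume "j < N"
      then show "(A *\<^sub>v v) $ j = Delta_map (\<lambda>j. v $ j) j"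
        unfolding A_def Delta_map_def using Suc.prems(1) Delta_carrier by (intro mult_mat_vec_of_int) auto
    qed
    finally show ?case by (simp only: funpow_Suc_right o_apply)
  qed
  then show ?thesis by (simp add: act)
qed

lemma act_unit_vec: "act p s n k *\<^sub>v unit_vec N 0 = (unit_vec N 0 :: 'a::field_char_0 vec)"
proof (rule eq_vecI)
  fix i assume "i < dim_vec (unit_vec N 0 :: 'a vec)"
  then have i: "i < N" by simp
  have "(act p s n k *\<^sub>v unit_vec N 0) $ i = (Delta_map ^^ k) (\<lambda>j. (unit_vec N 0 :: 'a vec) $ j) i"
    using i by (simp add: act_mult_vec)
  also have "\<dots> = (Delta_map ^^ k) (\<lambda>j. of_bool (j = 0)) i"
    using i by (intro Delta_map_pow_cong) auto
  also have "\<dots> = of_bool (i = 0)"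
    using Delta_map_pow_unit_0 i by blast
  finally show "(act p s n k *\<^sub>v unit_vec N 0) $ i = (unit_vec N 0 :: 'a vec) $ i"
    using i by simp
qed (use Delta_carrier in \<open>simp add: act_def\<close>)

subsection \<open>The invariant linear form\<close>

text \<open>\<^term>\<open>block_sum q k\<close> sums the coordinates along \<open>\<xi>\<^sub>s\<^sup>k B\<^sub>s\<^sub>-\<^sub>1\<close> in the \<open>q\<close>-th
  \<open>\<delta>\<^sub>s\<close> copy.\<close>

definition weight :: "nat \<Rightarrow> nat \<Rightarrow> 'a::ring_1" where
  "weight j r = 1 - of_nat p * of_bool (r + j = p - 1)"

definition delta1_form :: "nat \<Rightarrow> (nat \<Rightarrow> 'a::ring_1) \<Rightarrow> 'a" where
  "delta1_form j x = (\<Sum>r<p - 1. weight j r * x (n + r))"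

definition block_sum :: "nat \<Rightarrow> nat \<Rightarrow> (nat \<Rightarrow> 'a::ring_1) \<Rightarrow> 'a" where
  "block_sum q k x = (\<Sum>r<d'. x (starts + q * ds + (k * d' + r)))"

definition ell :: "nat \<Rightarrow> (nat \<Rightarrow> 'a::ring_1) \<Rightarrow> 'a" where
  "ell j x = x 0 - delta1_form j x + block_sum 0 (p - 1 - j) x
     + (if 2 \<le> n then block_sum 1 (p - 1 - j) x else 0)"

lemma ell_cong:
  assumes "\<And>i. i < N \<Longrightarrow> x i = y i"
  shows "ell j x = ell j y"
proof -
  have "0 < N" using delta1_index_less[of 0] p_ge_2 by simp
  moreover have "delta1_form j x = delta1_form j y"
    unfolding delta1_form_def using assms delta1_index_less by (intro sum.cong) auto
  moreover have "block_sum q k x = block_sum q k y" if "q < n" "k < p" for q k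
    unfolding block_sum_def using assms deltas_index_less[OF that] by (intro sum.cong) auto
  ultimately show ?thesis using n_pos p_ge_2 by (simp add: ell_def assms)
qed

lemma ell_diff: "ell j (\<lambda>i. x i - y i) = ell j x - ell j y"
  by (simp add: ell_def delta1_form_def block_sum_def sum_subtractf right_diff_distrib)

lemma ell_unit_0: "ell 0 (\<lambda>i. c * of_bool (i = 0)) = c"
  using n_pos by (simp add: ell_def delta1_form_def block_sum_def starts_def start2_def)

lemma ell_mem:
  assumes K: "unital_additive_subgroup K" and x: "\<And>i. i < N \<Longrightarrow> x i \<in> K"
  shows "ell 0 x \<in> K"
proof -
  interpret K: unital_additive_subgroup K by (rule K)
  have "0 < N" using delta1_index_less[of 0] p_ge_2 by simp
  have block: "block_sum q (p - 1) x \<in> K" if "q < n" for q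
    unfolding block_sum_def using p_ge_2 by (intro K.sum_mem x deltas_index_less[OF that]) auto
  have "delta1_form 0 x = (\<Sum>r<p - 1. x (n + r))"
    unfolding delta1_form_def weight_def by (intro sum.cong) auto
  also have "\<dots> \<in> K" by (intro K.sum_mem x delta1_index_less) simp
  finally show ?thesis
    using block[OF n_pos] block[of 1] x[OF \<open>0 < N\<close>] by (simp add: ell_def K.add_mem K.diff_mem K.zero_mem)
qed

lemma sum_weight:
  assumes "j \<le> p - 1"
  shows "(\<Sum>r<p. weight j r :: 'a::ring_1) = 0"
proof -
  have "(\<Sum>r<p. of_bool (r + j = p - 1) :: 'a) = (\<Sum>r<p. of_bool (r = p - 1 - j) * 1)"
    using assms by (intro sum.cong) auto
  also have "\<dots> = 1" using p_ge_2 by (intro sum_of_bool_eq_mult) simp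
  finally show ?thesis by (simp add: weight_def sum_subtractf sum_distrib_left[symmetric])
qed

lemma delta1_form_Delta:
  assumes "j \<le> p - 1"
  shows "delta1_form j (Delta_map x) = delta1_form (Suc j) x + weight j 0 * U_part x"
proof -
  have "(\<Sum>r<p - 1. weight j r * (of_bool (r = 0) * U_part x)) = (\<Sum>r<p - 1. of_bool (r = 0) * (weight j r * U_part x))"
    by (intro sum.cong) auto
  also have "\<dots> = weight j 0 * U_part x"
    using p_ge_2 by (intro sum_of_bool_eq_mult) simp
  finally have U: "(\<Sum>r<p - 1. weight j r * (of_bool (r = 0) * U_part x)) = weight j 0 * U_part x" .
  have "delta1_form j (Delta_map x)
      = (\<Sum>r<p - 1. weight j r * row_apply (delta p 1) r (\<lambda>c. x (n + c))) + weight j 0 * U_part x"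
    unfolding delta1_form_def Delta_map_def
    using U by (simp add: row_apply_Delta_delta1 distrib_left sum.distrib)
  also have "\<dots> = (\<Sum>c<p - 1. weight j (Suc c) * x (n + c)) - (\<Sum>r<p. weight j r) * x (n + (p - 2))
      + weight j 0 * U_part x"
    by (simp only: sum_row_apply_delta_1[OF p_ge_2])
  also have "\<dots> = delta1_form (Suc j) x + weight j 0 * U_part x"
    unfolding sum_weight[OF assms] by (simp add: delta1_form_def weight_def)
  finally show ?thesis .
qed

lemma delta1_form_wrap: "delta1_form p x = delta1_form 0 x"
  unfolding delta1_form_def weight_def by (intro sum.cong) auto

lemma block_sum_Delta_shift:
  assumes "q < n" "1 \<le> k" "k < p"
  shows "block_sum q k (Delta_map x) = block_sum q (k - 1) x"
  unfolding block_sum_def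
proof (intro sum.cong refl)
  fix r assume "r \<in> {..<d'}"
  then have r: "r < d'" by simp
  have s: "s = Suc (Suc (s - 3 + 1))" "Suc (s - 3 + 1) = s - 1" using s_ge_3 by auto
  have "k * d' + r < ds"
    using block_index_less[OF assms(3) r] unfolding ds_eq .
  then have "Delta_map x (starts + q * ds + (k * d' + r))
      = row_apply (delta p s) (k * d' + r) (\<lambda>c. x (starts + q * ds + c))"
    using row_apply_Delta_deltas[OF assms(1)] by (simp add: Delta_map_def add.assoc)
  also have "\<dots> = x (starts + q * ds + ((k - 1) * d' + r))"
    using row_apply_delta_shift[OF p_ge_2 assms(2,3), of r "s - 3 + 1"] r s by simp
  finally show "Delta_map x (starts + q * ds + (k * d' + r)) = x (starts + q * ds + ((k - 1) * d' + r))" .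
qed

lemma block_sum_Delta_wrap:
  assumes "q < n"
  shows "block_sum q 0 (Delta_map x) = block_sum q (p - 1) x - of_nat p * x (starts + q * ds + (ds - 1))"
proof -
  have s: "s = Suc (Suc (s - 3 + 1))" "Suc (s - 3 + 1) = s - 1" using s_ge_3 by auto
  let ?y = "\<lambda>c. x (starts + q * ds + ((p - 1) * d' + c))"
  have "block_sum q 0 (Delta_map x) = (\<Sum>r<d'. row_apply (delta p (s - 1)) r ?y)"
    unfolding block_sum_def
  proof (intro sum.cong refl)
    fix r assume "r \<in> {..<d'}"
    then have r: "r < d'" by simp
    then have "r < ds" using block_index_less[of 0 p r d'] p_ge_2 unfolding ds_eq by simp
    then have "Delta_map x (starts + q * ds + (0 * d' + r)) = row_apply (delta p s) r (\<lambda>c. x (starts + q * ds + c))"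
      using row_apply_Delta_deltas[OF assms(1)] by (simp add: Delta_map_def)
    also have "\<dots> = row_apply (delta p (s - 1)) r ?y"
      using row_apply_delta_wrap[OF p_ge_2, of r "s - 3 + 1"] r s by (simp add: add.assoc)
    finally show "Delta_map x (starts + q * ds + (0 * d' + r)) = row_apply (delta p (s - 1)) r ?y" .
  qed
  also have "\<dots> = (\<Sum>r<d'. ?y r) - of_nat p * ?y (d' - 1)"
    using s_ge_3 by (intro sum_row_apply_delta[OF p_ge_2]) simp
  also have "\<dots> = block_sum q (p - 1) x - of_nat p * x (starts + q * ds + (ds - 1))"
  proof -
    have "(p - 1) * d' + (d' - 1) = ds - 1" using p_ge_2 d'_pos unfolding ds_eq by (cases p) auto
    then show ?thesis by (simp add: block_sum_def)
  qed
  finally show ?thesis .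
qed

lemma ell_Delta:
  assumes "j < p - 1"
  shows "ell j (Delta_map x) = ell (Suc j) x"
proof -
  have w: "weight j 0 = (1::'a)" using assms by (simp add: weight_def)
  have k: "1 \<le> p - 1 - j" "p - 1 - j < p" "p - 1 - j - 1 = p - 1 - Suc j" using assms by auto
  show ?thesis
    using block_sum_Delta_shift[OF n_pos k(1,2), of x] block_sum_Delta_shift[of 1 "p - 1 - j" x] k(1,2)
    unfolding ell_def delta1_form_Delta[OF less_imp_le[OF assms]] w k(3)
    by (simp add: Delta_map_def row_apply_Delta_first)
qed

lemma ell_Delta_last: "ell (p - 1) (Delta_map x) = ell 0 x + of_nat p * x (start2 + (d2 - 1))"
proof -
  have w: "weight (p - 1) 0 = (1 - of_nat p :: 'a)" by (simp add: weight_def)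
  have Suc_p: "Suc (p - 1) = p" using p_ge_2 by simp
  show ?thesis
    using block_sum_Delta_wrap[OF n_pos, of x] block_sum_Delta_wrap[of 1 x]
    unfolding ell_def delta1_form_Delta[OF le_refl] w Suc_p delta1_form_wrap
    by (simp add: Delta_map_def row_apply_Delta_first U_part_def algebra_simps)
qed

lemma ell_Delta_pow: "j \<le> p - 1 \<Longrightarrow> ell 0 ((Delta_map ^^ j) x) = ell j x"
proof (induct j arbitrary: x)
  case (Suc j)
  then show ?case by (simp only: funpow_Suc_right o_apply) (simp add: ell_Delta)
qed simp

lemma ell_Delta_pow_p: "ell 0 ((Delta_map ^^ p) x) = ell 0 x + of_nat p * x (start2 + (d2 - 1))"
proof -
  obtain m where p: "p = Suc m" using p_ge_2 by (cases p) auto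
  have "(Delta_map ^^ p) x = (Delta_map ^^ (p - 1)) (Delta_map x)"
    unfolding p by (simp only: funpow_Suc_right o_apply diff_Suc_1)
  then have "ell 0 ((Delta_map ^^ p) x) = ell (p - 1) (Delta_map x)"
    using ell_Delta_pow[of "p - 1" "Delta_map x"] by simp
  then show ?thesis using ell_Delta_last by simp
qed

text \<open>\<^term>\<open>delta2_form b h\<close> pairs the weights \<open>h\<close> with the coordinates along \<open>\<xi>\<^sub>2\<^sup>b B\<^sub>1\<close>
  in the first \<open>\<delta>\<^sub>2\<close> copy.\<close>

definition delta2_form :: "nat \<Rightarrow> (nat \<Rightarrow> 'a) \<Rightarrow> (nat \<Rightarrow> 'a::ring_1) \<Rightarrow> 'a" where
  "delta2_form b h x = (\<Sum>c<p - 1. h c * x (start2 + (b * (p - 1) + c)))"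

lemma delta2_form_Delta_shift:
  assumes "1 \<le> b" "b < p"
  shows "delta2_form b h (Delta_map x) = delta2_form (b - 1) h x"
  unfolding delta2_form_def
proof (intro sum.cong refl arg_cong2[where f = "(*)"])
  fix c assume "c \<in> {..<p - 1}"
  then have c: "c < deg p (Suc 0)" by simp
  have "b * (p - 1) + c < d2" using block_index_less[OF assms(2), of c "p - 1"] c by (simp add: d2_eq)
  then have "Delta_map x (start2 + (b * (p - 1) + c)) = row_apply (delta p 2) (b * (p - 1) + c) (\<lambda>c'. x (start2 + c'))"
    by (simp add: Delta_map_def row_apply_Delta_delta2)
  also have "\<dots> = x (start2 + ((b - 1) * (p - 1) + c))"
    using row_apply_delta_shift[OF p_ge_2 assms c] by (simp add: numeral_2_eq_2)
  finally show "Delta_map x (start2 + (b * (p - 1) + c)) = x (start2 + ((b - 1) * (p - 1) + c))" .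
qed

lemma delta2_form_Delta_wrap:
  assumes "(\<Sum>r<p. h r) = 0"
  shows "delta2_form 0 h (Delta_map x) = delta2_form (p - 1) (\<lambda>c. h (Suc c)) x"
proof -
  let ?y = "\<lambda>c. x (start2 + ((p - 1) * (p - 1) + c))"
  have "delta2_form 0 h (Delta_map x) = (\<Sum>c<p - 1. h c * row_apply (delta p 1) c ?y)"
    unfolding delta2_form_def
  proof (intro sum.cong refl arg_cong2[where f = "(*)"])
    fix c assume "c \<in> {..<p - 1}"
    then have c: "c < deg p (Suc 0)" by simp
    have "c < d2" using block_index_less[of 0 p c "p - 1"] c p_ge_2 by (simp add: d2_eq)
    then have "Delta_map x (start2 + (0 * (p - 1) + c)) = row_apply (delta p 2) c (\<lambda>c'. x (start2 + c'))"
      by (simp add: Delta_map_def row_apply_Delta_delta2)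
    also have "\<dots> = row_apply (delta p 1) c ?y"
      using row_apply_delta_wrap[OF p_ge_2 c] by (simp add: numeral_2_eq_2)
    finally show "Delta_map x (start2 + (0 * (p - 1) + c)) = row_apply (delta p 1) c ?y" .
  qed
  also have "\<dots> = (\<Sum>c<p - 1. h (Suc c) * ?y c) - (\<Sum>r<p. h r) * ?y (p - 2)"
    by (rule sum_row_apply_delta_1[OF p_ge_2])
  also have "\<dots> = delta2_form (p - 1) (\<lambda>c. h (Suc c)) x"
    unfolding assms by (simp add: delta2_form_def)
  finally show ?thesis .
qed

lemma delta2_form_Delta_pow:
  "j \<le> p - 1 \<Longrightarrow> delta2_form (p - 1) h ((Delta_map ^^ j) x) = delta2_form (p - 1 - j) h x"
proof (induct j arbitrary: x)
  case (Suc j)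
  then have "delta2_form (p - 1) h ((Delta_map ^^ Suc j) x) = delta2_form (p - 1 - j) h (Delta_map x)"
    by (simp only: funpow_Suc_right o_apply)
  also have "\<dots> = delta2_form (p - 1 - Suc j) h x"
    using Suc.prems by (subst delta2_form_Delta_shift) (simp_all add: Suc_diff_Suc)
  finally show ?case .
qed simp

lemma delta2_form_Delta_pow_p:
  assumes "(\<Sum>r<p. h r) = 0"
  shows "delta2_form (p - 1) h ((Delta_map ^^ p) x) = delta2_form (p - 1) (\<lambda>c. h (Suc c)) x"
proof -
  obtain m where p: "p = Suc m" using p_ge_2 by (cases p) auto
  have "(Delta_map ^^ p) x = (Delta_map ^^ (p - 1)) (Delta_map x)"
    unfolding p by (simp only: funpow_Suc_right o_apply diff_Suc_1)
  then have "delta2_form (p - 1) h ((Delta_map ^^ p) x) = delta2_form 0 h (Delta_map x)"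
    using delta2_form_Delta_pow[of "p - 1" h "Delta_map x"] by simp
  then show ?thesis using delta2_form_Delta_wrap[OF assms] by simp
qed

text \<open>The coefficient of \<open>\<xi>\<^sub>1\<^sup>p\<^sup>-\<^sup>2\<close> in \<open>\<xi>\<^sub>1\<^sup>k\<close> with respect to \<open>B\<^sub>1\<close>.\<close>

definition top_coeff :: "nat \<Rightarrow> 'a::ring_1" where
  "top_coeff k = of_bool (k mod p = p - 2) - of_bool (k mod p = p - 1)"

lemma sum_top_coeff: "(\<Sum>r<p. top_coeff (l + r)) = 0"
proof -
  have "(\<Sum>r<p. top_coeff (l + r)) = (\<Sum>r<p. (of_bool (r = p - 2) - of_bool (r = p - 1) :: 'a))"
    unfolding top_coeff_def by (rule sum_lessThan_mod_shift)
  also have "\<dots> = 0"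
    using p_ge_2 sum_of_bool_eq_mult[of "p - 2" p "\<lambda>_. 1 :: 'a"] sum_of_bool_eq_mult[of "p - 1" p "\<lambda>_. 1 :: 'a"]
    by (simp add: sum_subtractf)
  finally show ?thesis .
qed

lemma delta2_last: "x (start2 + (d2 - 1)) = delta2_form (p - 1) top_coeff x"
proof -
  have "delta2_form (p - 1) top_coeff x = (\<Sum>c<p - 1. of_bool (c = p - 2) * x (start2 + ((p - 1) * (p - 1) + c)))"
    unfolding delta2_form_def top_coeff_def by (intro sum.cong) auto
  also have "\<dots> = x (start2 + ((p - 1) * (p - 1) + (p - 2)))"
    using p_ge_2 by (intro sum_of_bool_eq_mult) simp
  also have "(p - 1) * (p - 1) + (p - 2) = d2 - 1"
    using p_ge_2 unfolding d2_eq by (cases p) auto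
  finally show ?thesis by (rule sym)
qed

lemma delta2_last_Delta_pow:
  "(Delta_map ^^ (p * l)) x (start2 + (d2 - 1)) = delta2_form (p - 1) (\<lambda>c. top_coeff (l + c)) x"
proof (induct l arbitrary: x)
  case 0
  show ?case using delta2_last[of x] by simp
next
  case (Suc l)
  have "(Delta_map ^^ (p * Suc l)) x = (Delta_map ^^ (p * l)) ((Delta_map ^^ p) x)"
    by (simp only: mult_Suc_right add.commute[of p] funpow_add o_apply)
  then show ?case
    using Suc delta2_form_Delta_pow_p[OF sum_top_coeff, of l] by simp
qed

lemma sum_delta2_last_Delta_pow: "(\<Sum>l<q * p. (Delta_map ^^ (p * l)) x (start2 + (d2 - 1))) = 0"
proof -
  have "(\<Sum>l<q * p. top_coeff (l + c)) = (0::'a)" for c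
  proof -
    have "(\<Sum>l<q * p. top_coeff (l + c)) = (\<Sum>k<q. \<Sum>r<p. (top_coeff (k * p + c + r) :: 'a))"
      unfolding sum_lessThan_mult by (simp add: ac_simps)
    also have "\<dots> = 0" by (intro sum.neutral ballI sum_top_coeff)
    finally show ?thesis .
  qed
  then have "(\<Sum>c<p - 1. (\<Sum>l<q * p. top_coeff (l + c)) * x (start2 + ((p - 1) * (p - 1) + c))) = 0"
    by simp
  then show ?thesis
    unfolding delta2_last_Delta_pow delta2_form_def sum_distrib_right by (subst sum.swap)
qed

lemma ell_Delta_pow_mult_p:
  "ell 0 ((Delta_map ^^ (p * l)) x) = ell 0 x + of_nat p * (\<Sum>i<l. (Delta_map ^^ (p * i)) x (start2 + (d2 - 1)))"
proof (induct l)
  case (Suc l)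
  have "(Delta_map ^^ (p * Suc l)) x = (Delta_map ^^ p) ((Delta_map ^^ (p * l)) x)"
    by (simp only: mult_Suc_right funpow_add o_apply)
  then show ?case using Suc by (simp add: ell_Delta_pow_p algebra_simps)
qed simp

theorem ell_Delta_pow_invariant: "ell 0 ((Delta_map ^^ (p ^ (s - 1))) x) = ell 0 x"
proof -
  have s: "s - 1 = Suc (Suc (s - 3))" using s_ge_3 by simp
  have pow: "p ^ (s - 1) = p * (p ^ (s - 3) * p)" unfolding s by (simp add: mult.commute)
  show ?thesis unfolding pow ell_Delta_pow_mult_p sum_delta2_last_Delta_pow by simp
qed

lemma T_rep_eq: "T_rep p s n j = (of_nat j / of_nat (p ^ s) :: 'a::field_char_0) \<cdot>\<^sub>v unit_vec N 0"
  by (simp add: T_rep_def rankN_eq)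

theorem T_rep_cocycle:
  fixes K :: "'a::field_char_0 set"
  assumes K: "unital_additive_subgroup K"
  shows "in_lattice K (T_rep p s n ((i + j) mod p ^ s) - (act p s n i *\<^sub>v T_rep p s n j + T_rep p s n i))"
proof -
  define P where "P = p ^ s"
  have P: "(of_nat P :: 'a) \<noteq> 0" using p_ge_2 by (simp add: P_def)
  have "of_nat ((i + j) mod P) + of_nat ((i + j) div P) * of_nat P = (of_nat i + of_nat j :: 'a)"
    by (simp only: of_nat_add[symmetric] of_nat_mult[symmetric] mod_div_mult_eq)
  then have coeff: "of_nat ((i + j) mod P) / of_nat P - (of_nat j / of_nat P + of_nat i / of_nat P)
      = (of_int (- int ((i + j) div P)) :: 'a)"
    using P by (simp add: field_simps)
  have act: "act p s n i *\<^sub>v T_rep p s n j = (of_nat j / of_nat P :: 'a) \<cdot>\<^sub>v unit_vec N 0"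
    unfolding T_rep_eq mult_mat_vec[OF act_carrier unit_vec_carrier] act_unit_vec P_def ..
  show ?thesis
    unfolding in_lattice_def
  proof (intro allI impI)
    fix t assume "t < dim_vec (T_rep p s n ((i + j) mod p ^ s) - (act p s n i *\<^sub>v T_rep p s n j + T_rep p s n i))"
    then have t: "t < N" by (simp add: T_rep_eq)
    have "(T_rep p s n ((i + j) mod p ^ s) - (act p s n i *\<^sub>v T_rep p s n j + T_rep p s n i)) $ t
        = (of_int (- int ((i + j) div P)) * of_bool (t = 0) :: 'a)"
    proof -
      have "(act p s n i *\<^sub>v T_rep p s n j) $ t = (of_nat j / of_nat P * of_bool (t = 0) :: 'a)"
        unfolding act using t by simp
      then show ?thesis using t coeff by (simp add: T_rep_eq P_def[symmetric] algebra_simps)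
    qed
    then show "(T_rep p s n ((i + j) mod p ^ s) - (act p s n i *\<^sub>v T_rep p s n j + T_rep p s n i)) $ t \<in> K"
      using unital_additive_subgroup.of_int_mem[OF K, of "- int ((i + j) div P)"]
        unital_additive_subgroup.zero_mem[OF K] by simp
  qed
qed

theorem T_rep_not_coboundary:
  fixes K :: "'a::field_char_0 set"
  assumes K: "unital_additive_subgroup K" and inv_p: "1 / of_nat p \<notin> K"
  shows "\<not> (\<exists>x \<in> carrier_vec N. in_lattice K (T_rep p s n (p ^ (s - 1)) - (act p s n (p ^ (s - 1)) *\<^sub>v x - x)))"
proof
  assume "\<exists>x \<in> carrier_vec N. in_lattice K (T_rep p s n (p ^ (s - 1)) - (act p s n (p ^ (s - 1)) *\<^sub>v x - x))"
  then obtain x where x: "x \<in> carrier_vec N"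
    and lattice: "in_lattice K (T_rep p s n (p ^ (s - 1)) - (act p s n (p ^ (s - 1)) *\<^sub>v x - x))" by blast
  define m where "m = p ^ (s - 1)"
  define y where "y = T_rep p s n m - (act p s n m *\<^sub>v x - x)"
  have ratio: "(of_nat m / of_nat p ^ s :: 'a) = 1 / of_nat p"
  proof -
    have "s = Suc (s - 1)" using s_ge_3 by simp
    then have "p ^ s = p * m" unfolding m_def by (metis power_Suc)
    moreover have "0 < m" using p_ge_2 by (simp add: m_def)
    ultimately show ?thesis using p_ge_2 by (simp flip: of_nat_power)
  qed
  have y: "y $ i = 1 / of_nat p * of_bool (i = 0) - ((Delta_map ^^ m) (\<lambda>j. x $ j) i - x $ i)" if "i < N" for i
    using that x by (simp add: y_def T_rep_eq ratio act_mult_vec)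
  have "ell 0 (\<lambda>i. y $ i) \<in> K"
    using lattice x by (intro ell_mem[OF K]) (simp add: in_lattice_def y_def m_def T_rep_eq)
  moreover have "ell 0 (\<lambda>i. y $ i) = 1 / of_nat p"
  proof -
    have "ell 0 (\<lambda>i. y $ i) = ell 0 (\<lambda>i. 1 / of_nat p * of_bool (i = 0) - ((Delta_map ^^ m) (\<lambda>j. x $ j) i - x $ i))"
      using y by (rule ell_cong)
    also have "\<dots> = 1 / of_nat p"
      unfolding ell_diff ell_unit_0 m_def ell_Delta_pow_invariant by simp
    finally show ?thesis .
  qed
  ultimately show False using inv_p by simp
qed

end

theorem lemma6:
  fixes p s n :: nat and K :: "'f::field_char_0 set"
  assumes "prime p" and "s \<ge> 3" and "n \<ge> 1" and "admissible_K p K"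
  shows "(\<forall>i<p ^ s. \<forall>j<p ^ s.
            in_lattice K (T_rep p s n ((i + j) mod p ^ s)
               - (act p s n i *\<^sub>v T_rep p s n j + T_rep p s n i)))
       \<and> \<not> (\<exists>x \<in> carrier_vec (rankN p s n).
            in_lattice K (T_rep p s n (p ^ (s - 1))
               - (act p s n (p ^ (s - 1)) *\<^sub>v x - x)))"
proof -
  interpret Delta_lattice p s n
    using assms(1-3) by unfold_locales (simp_all add: prime_ge_2_nat)
  show ?thesis
    using T_rep_cocycle[OF admissible_K(1)[OF assms(1,4)]]
      T_rep_not_coboundary[OF admissible_K[OF assms(1,4)]]
    unfolding rankN_eq by blast
qed

end
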